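(* Let $Y$ be a CFG-space over a Boolean algebra $B$ and let $y_0,\dots,y_n\in Y$ be such that every element of $Y$ is a convex combination of $y_0,\dots,y_n$ and $d(y_i,y_j)=1$ for all $i\ne j$. Let $f:Y\to B$ be a contractive map (where $B$ carries the metric $d(a,b)=a\triangle b$) such that $f(y_i)\vee f(y_j)=1$ for all $i\ne j$. Then the equation $f(x)=0$ has at most one solution $x\in Y$.
   Context: A Boolean metric space over $B$ is a set with symmetric $d$ into $B$, $d(x,y)=0$ iff $x=y$, $d(x,z)\le d(x,y)\vee d(y,z)$. A map $f$ is contractive if $d(f(x),f(y))\le d(x,y)$. A partition of $B$ is a finite family of pairwise disjoint elements with supremum $1$; $x$ is a convex combination of $x_0,\dots,x_n$ with coefficients a partition $a_0,\dots,a_n$ if $a_i\wedge d(x,x_i)=0$ for all $i$. A CFG-space is a Boolean metric space that is convex (every such convex combination of its points exists in it) and finitely generated (some finite subset $S$ has every point as a convex combination of points of $S$). $\triangle$ is symmetric difference. *)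

theory Defs
  imports Main
begin

definition symdiff :: "'b::boolean_algebra \<Rightarrow> 'b \<Rightarrow> 'b" where
  "symdiff a b = sup (a - b) (b - a)"

definition bool_metric :: "'a set \<Rightarrow> ('a \<Rightarrow> 'a \<Rightarrow> 'b::boolean_algebra) \<Rightarrow> bool" where
  "bool_metric Y d \<longleftrightarrow>
     (\<forall>x\<in>Y. \<forall>y\<in>Y. d x y = d y x) \<and>
     (\<forall>x\<in>Y. \<forall>y\<in>Y. d x y = bot \<longleftrightarrow> x = y) \<and>
     (\<forall>x\<in>Y. \<forall>y\<in>Y. \<forall>z\<in>Y. d x z \<le> sup (d x y) (d y z))"

fun joinn :: "(nat \<Rightarrow> 'b::boolean_algebra) \<Rightarrow> nat \<Rightarrow> 'b" where
  "joinn a 0 = a 0"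
| "joinn a (Suc n) = sup (joinn a n) (a (Suc n))"

definition partition :: "nat \<Rightarrow> (nat \<Rightarrow> 'b::boolean_algebra) \<Rightarrow> bool" where
  "partition n a \<longleftrightarrow>
     (\<forall>i\<le>n. \<forall>j\<le>n. i \<noteq> j \<longrightarrow> inf (a i) (a j) = bot) \<and> joinn a n = top"

definition convex_comb ::
  "('a \<Rightarrow> 'a \<Rightarrow> 'b::boolean_algebra) \<Rightarrow> 'a \<Rightarrow> nat \<Rightarrow> (nat \<Rightarrow> 'a) \<Rightarrow> (nat \<Rightarrow> 'b) \<Rightarrow> bool" where
  "convex_comb d x n xs a \<longleftrightarrow> partition n a \<and> (\<forall>i\<le>n. inf (a i) (d x (xs i)) = bot)"

definition bm_convex :: "'a set \<Rightarrow> ('a \<Rightarrow> 'a \<Rightarrow> 'b::boolean_algebra) \<Rightarrow> bool" where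
  "bm_convex Y d \<longleftrightarrow>
     (\<forall>n xs a. (\<forall>i\<le>n. xs i \<in> Y) \<and> partition n a \<longrightarrow> (\<exists>x\<in>Y. convex_comb d x n xs a))"

definition bm_fin_gen :: "'a set \<Rightarrow> ('a \<Rightarrow> 'a \<Rightarrow> 'b::boolean_algebra) \<Rightarrow> bool" where
  "bm_fin_gen Y d \<longleftrightarrow>
     (\<exists>S. finite S \<and> S \<subseteq> Y \<and>
        (\<forall>x\<in>Y. \<exists>n xs a. (\<forall>i\<le>n. xs i \<in> S) \<and> convex_comb d x n xs a))"

definition CFG_space :: "'a set \<Rightarrow> ('a \<Rightarrow> 'a \<Rightarrow> 'b::boolean_algebra) \<Rightarrow> bool" where
  "CFG_space Y d \<longleftrightarrow> bool_metric Y d \<and> bm_convex Y d \<and> bm_fin_gen Y d"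

definition contractive_to_B :: "'a set \<Rightarrow> ('a \<Rightarrow> 'a \<Rightarrow> 'b::boolean_algebra) \<Rightarrow> ('a \<Rightarrow> 'b) \<Rightarrow> bool" where
  "contractive_to_B Y d f \<longleftrightarrow> (\<forall>x\<in>Y. \<forall>y\<in>Y. symdiff (f x) (f y) \<le> d x y)"

end

theory Submission
  imports Defs
begin

(* Write two zeros x, x' of f as convex combinations of y_0..y_n with
   partitions a and b.  Contractivity together with f x = 0 gives f(y_i) <= d(x, y_i), and
   since a_i is disjoint from d(x, y_i) we get a_i <= -f(y_i); likewise b_j <= -f(y_j).
   The products a_i /\ b_j refine the partition of the unit.  For i ~= j such a cell is 0,
   because f(y_i) \/ f(y_j) = 1.  For i = j the cell is disjoint from d(x, x'), since
   d(x, x') <= d(x, y_i) \/ d(x', y_i) by the ultrametric triangle inequality.  Hence d(x, x')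
   misses every cell of a partition, so d(x, x') = 0 and x = x'. *)

lemma joinn_disjoint:
  fixes c :: "'b::boolean_algebra"
  assumes "\<forall>i\<le>n. inf c (a i) = bot"
  shows "inf c (joinn a n) = bot"
  using assms
proof (induction n)
  case 0 then show ?case by simp
next
  case (Suc n) then show ?case by (simp add: inf_sup_distrib1)
qed

lemma disjoint_partition_zero:
  fixes c :: "'b::boolean_algebra"
  assumes "partition n a" and "\<forall>i\<le>n. inf c (a i) = bot"
  shows "c = bot"
proof -
  have "inf c (joinn a n) = bot" using assms(2) by (rule joinn_disjoint)
  with assms(1) show ?thesis by (simp add: partition_def)
qed

lemma disjoint_refinement_zero:
  fixes c :: "'b::boolean_algebra"
  assumes "partition n a" and "partition m b"
    and cells: "\<forall>i\<le>n. \<forall>j\<le>m. inf c (inf (a i) (b j)) = bot"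
  shows "c = bot"
proof -
  have "inf c (a i) = bot" if "i \<le> n" for i
  proof (rule disjoint_partition_zero[OF assms(2)], intro allI impI)
    fix j assume "j \<le> m"
    then show "inf (inf c (a i)) (b j) = bot" using cells that by (simp add: inf_assoc)
  qed
  then show ?thesis using assms(1) by (blast intro: disjoint_partition_zero)
qed

lemma symdiff_bot_left: "symdiff bot (z::'b::boolean_algebra) = z"
  by (simp add: symdiff_def diff_eq)

lemma coefficient_below_compl:
  assumes contr: "contractive_to_B Y d f"
    and comb: "convex_comb d z n y a" and "z \<in> Y" and "f z = bot"
    and "i \<le> n" and "y i \<in> Y"
  shows "a i \<le> - f (y i)"
proof -
  have "symdiff (f z) (f (y i)) \<le> d z (y i)"
    using contr assms(3,6) unfolding contractive_to_B_def by blast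
  then have "f (y i) \<le> d z (y i)" using \<open>f z = bot\<close> by (simp add: symdiff_bot_left)
  moreover have "inf (a i) (d z (y i)) = bot" using comb \<open>i \<le> n\<close> by (simp add: convex_comb_def)
  ultimately have "inf (a i) (f (y i)) \<le> bot"
    by (metis inf_mono order_refl)
  then have "inf (a i) (f (y i)) = bot" by (rule bot_unique[THEN iffD1])
  then show ?thesis by (simp add: inf_shunt)
qed

lemma common_cell_disjoint_dist:
  assumes bm: "bool_metric Y d" and "x \<in> Y" "x' \<in> Y" "p \<in> Y"
    and ex: "inf a (d x p) = bot" and ex': "inf b (d x' p) = bot"
  shows "inf (d x x') (inf a b) = bot"
proof -
  have "d x x' \<le> sup (d x p) (d p x')" and "d p x' = d x' p"
    using bm assms(2-4) unfolding bool_metric_def by blast+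
  then have "d x x' \<le> sup (d x p) (d x' p)" by simp
  then have "inf (d x x') (inf a b) \<le> inf (sup (d x p) (d x' p)) (inf a b)"
    using order_refl by (rule inf_mono)
  also have "\<dots> = sup (inf (inf a (d x p)) b) (inf (inf b (d x' p)) a)"
    by (simp only: inf_sup_distrib1 inf_sup_distrib2 inf_aci)
  also have "\<dots> = bot" using ex ex' by simp
  finally show ?thesis by (simp add: bot_unique)
qed

theorem lemma3p3:
  fixes Y :: "'a set" and d :: "'a \<Rightarrow> 'a \<Rightarrow> 'b::boolean_algebra"
    and n :: nat and y :: "nat \<Rightarrow> 'a" and f :: "'a \<Rightarrow> 'b"
  assumes "CFG_space Y d"
    and "\<forall>i\<le>n. y i \<in> Y"
    and "\<forall>x\<in>Y. \<exists>a. convex_comb d x n y a"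
    and "\<forall>i\<le>n. \<forall>j\<le>n. i \<noteq> j \<longrightarrow> d (y i) (y j) = top"
    and "contractive_to_B Y d f"
    and "\<forall>i\<le>n. \<forall>j\<le>n. i \<noteq> j \<longrightarrow> sup (f (y i)) (f (y j)) = top"
  shows "\<forall>x\<in>Y. \<forall>x'\<in>Y. f x = bot \<and> f x' = bot \<longrightarrow> x = x'"
proof (intro ballI impI)
  fix x x' assume x: "x \<in> Y" and x': "x' \<in> Y" and zeros: "f x = bot \<and> f x' = bot"
  have bm: "bool_metric Y d" using assms(1) by (simp add: CFG_space_def)
  obtain a b where a: "convex_comb d x n y a" and b: "convex_comb d x' n y b"
    using assms(3) x x' by meson
  have "inf (d x x') (inf (a i) (b j)) = bot" if "i \<le> n" "j \<le> n" for i j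
  proof (cases "i = j")
    case False
    have "a i \<le> - f (y i)" "b j \<le> - f (y j)"
      using coefficient_below_compl[OF assms(5) a x] coefficient_below_compl[OF assms(5) b x']
        zeros that assms(2) by blast+
    then have "inf (a i) (b j) \<le> inf (- f (y i)) (- f (y j))" by (rule inf_mono)
    also have "\<dots> = - sup (f (y i)) (f (y j))" by simp
    also have "\<dots> = bot" using assms(6) that False by simp
    finally show ?thesis by (simp add: bot_unique)
  next
    case True
    have "inf (a i) (d x (y i)) = bot" "inf (b i) (d x' (y i)) = bot" "y i \<in> Y"
      using a b that assms(2) by (simp_all add: convex_comb_def)
    then show ?thesis using common_cell_disjoint_dist[OF bm x x'] True by blast
  qed
  then have "d x x' = bot"
    using a b by (intro disjoint_refinement_zero[of n a n b]) (auto simp: convex_comb_def)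
  then show "x = x'" using bm x x' unfolding bool_metric_def by blast
qed

end
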